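(* Let $R$ be a noetherian commutative ring with unit, let $L$ and $K$ be abelian monoids admitting cancellation, let $B=\bigoplus_{u\in L}B_u$ be an $L$-graded $R$-algebra and $A=\bigoplus_{w\in K}A_w$ a $K$-graded $R$-algebra without zero-divisors, and let $(\varphi,F)$ be a morphism from $B$ to $A$. Assume that the weight monoid $S(B)=\{u\in L;\ B_u\ne 0\}$ is finitely generated and that $\varphi$ restricts to an isomorphism $B_u\to A_{F(u)}$ for every $u\in L$. If $A$ is finitely generated over $R$, then $B$ is finitely generated over $R$.
   Context: For an abelian monoid $K$, a $K$-graded $R$-algebra is an associative commutative $R$-algebra with unit with a decomposition $A=\bigoplus_{w\in K}A_w$ into $R$-submodules with $A_wA_{w'}\subseteq A_{w+w'}$. A morphism from an $L$-graded algebra $B$ to a $K$-graded algebra $A$ is a pair $(\varphi,F)$ where $\varphi\colon B\to A$ is a homomorphism of $R$-algebras and $F\colon L\to K$ is a homomorphism of monoids with $\varphi(B_u)\subseteq A_{F(u)}$ for all $u\in L$. *)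

theory Defs
  imports "HOL-Algebra.Algebra"
begin

text \<open>A commutative unital R-algebra is a commutative ring A together with a
ring homomorphism iota from R to A (the structure map); scalar multiplication
of r on x is (iota r) times x.\<close>

definition r_algebra ::
  "('r,'m) ring_scheme \<Rightarrow> ('a,'n) ring_scheme \<Rightarrow> ('r \<Rightarrow> 'a) \<Rightarrow> bool" where
  "r_algebra R A \<iota> \<longleftrightarrow> cring R \<and> cring A \<and> \<iota> \<in> ring_hom R A"

definition r_submodule ::
  "('r,'m) ring_scheme \<Rightarrow> ('a,'n) ring_scheme \<Rightarrow> ('r \<Rightarrow> 'a) \<Rightarrow> 'a set \<Rightarrow> bool" where
  "r_submodule R A \<iota> M \<longleftrightarrow> M \<subseteq> carrier A \<and> \<zero>\<^bsub>A\<^esub> \<in> M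
     \<and> (\<forall>x\<in>M. \<forall>y\<in>M. x \<oplus>\<^bsub>A\<^esub> y \<in> M)
     \<and> (\<forall>r\<in>carrier R. \<forall>x\<in>M. \<iota> r \<otimes>\<^bsub>A\<^esub> x \<in> M)"

definition cancel_comm_monoid :: "('k,'m) monoid_scheme \<Rightarrow> bool" where
  "cancel_comm_monoid K \<longleftrightarrow> comm_monoid K \<and>
     (\<forall>a\<in>carrier K. \<forall>b\<in>carrier K. \<forall>c\<in>carrier K. a \<otimes>\<^bsub>K\<^esub> b = a \<otimes>\<^bsub>K\<^esub> c \<longrightarrow> b = c)"

definition graded_algebra ::
  "('r,'m) ring_scheme \<Rightarrow> ('a,'n) ring_scheme \<Rightarrow> ('r \<Rightarrow> 'a)
     \<Rightarrow> ('k,'p) monoid_scheme \<Rightarrow> ('k \<Rightarrow> 'a set) \<Rightarrow> bool" where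
  "graded_algebra R A \<iota> K Ag \<longleftrightarrow> r_algebra R A \<iota> \<and> comm_monoid K
     \<and> (\<forall>w\<in>carrier K. r_submodule R A \<iota> (Ag w))
     \<and> (\<forall>w\<in>carrier K. \<forall>w'\<in>carrier K. \<forall>x\<in>Ag w. \<forall>y\<in>Ag w'.
            x \<otimes>\<^bsub>A\<^esub> y \<in> Ag (w \<otimes>\<^bsub>K\<^esub> w'))
     \<and> (\<forall>a\<in>carrier A. \<exists>!c. (\<forall>w\<in>carrier K. c w \<in> Ag w)
            \<and> (\<forall>w. w \<notin> carrier K \<longrightarrow> c w = \<zero>\<^bsub>A\<^esub>)
            \<and> finite {w. c w \<noteq> \<zero>\<^bsub>A\<^esub>}
            \<and> a = finsum A c {w. c w \<noteq> \<zero>\<^bsub>A\<^esub>})"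

definition graded_morphism ::
  "('r,'m) ring_scheme
     \<Rightarrow> ('b,'n) ring_scheme \<Rightarrow> ('r \<Rightarrow> 'b) \<Rightarrow> ('l,'p) monoid_scheme \<Rightarrow> ('l \<Rightarrow> 'b set)
     \<Rightarrow> ('a,'q) ring_scheme \<Rightarrow> ('r \<Rightarrow> 'a) \<Rightarrow> ('k,'s) monoid_scheme \<Rightarrow> ('k \<Rightarrow> 'a set)
     \<Rightarrow> ('b \<Rightarrow> 'a) \<Rightarrow> ('l \<Rightarrow> 'k) \<Rightarrow> bool" where
  "graded_morphism R B \<iota>B L Bg A \<iota>A K Ag \<phi> F \<longleftrightarrow>
     \<phi> \<in> ring_hom B A \<and> (\<forall>r\<in>carrier R. \<phi> (\<iota>B r) = \<iota>A r)
     \<and> F \<in> hom L K \<and> F \<one>\<^bsub>L\<^esub> = \<one>\<^bsub>K\<^esub>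
     \<and> (\<forall>u\<in>carrier L. \<phi> ` Bg u \<subseteq> Ag (F u))"

definition weight_monoid ::
  "('b,'n) ring_scheme \<Rightarrow> ('l,'p) monoid_scheme \<Rightarrow> ('l \<Rightarrow> 'b set) \<Rightarrow> 'l set" where
  "weight_monoid B L Bg = {u\<in>carrier L. Bg u \<noteq> {\<zero>\<^bsub>B\<^esub>}}"

inductive_set mon_gen :: "('l,'p) monoid_scheme \<Rightarrow> 'l set \<Rightarrow> 'l set"
  for L and T where
    one: "\<one>\<^bsub>L\<^esub> \<in> mon_gen L T"
  | incl: "t \<in> T \<Longrightarrow> t \<in> mon_gen L T"
  | mult: "\<lbrakk>x \<in> mon_gen L T; y \<in> mon_gen L T\<rbrakk> \<Longrightarrow> x \<otimes>\<^bsub>L\<^esub> y \<in> mon_gen L T"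

definition fg_monoid_set :: "('l,'p) monoid_scheme \<Rightarrow> 'l set \<Rightarrow> bool" where
  "fg_monoid_set L S \<longleftrightarrow> (\<exists>T. finite T \<and> T \<subseteq> carrier L \<and> mon_gen L T = S)"

definition fg_algebra ::
  "('r,'m) ring_scheme \<Rightarrow> ('a,'n) ring_scheme \<Rightarrow> ('r \<Rightarrow> 'a) \<Rightarrow> bool" where
  "fg_algebra R A \<iota> \<longleftrightarrow> (\<exists>G. finite G \<and> G \<subseteq> carrier A
      \<and> generate_ring A (\<iota> ` carrier R \<union> G) = carrier A)"

end

theory Submission
  imports Defs "HOL-Library.Function_Algebras"
begin

text \<open>Split finitely many algebra generators of \<open>A\<close> into homogeneous components \<open>a\<^sub>i\<close>. Every element
  of \<open>A\<close> is then an \<open>R\<close>-linear combination of monomials \<open>a\<^sup>e\<close>, and its component of degree \<open>w\<close>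
  only involves monomials of degree \<open>w\<close>. Since \<open>\<phi>\<close> identifies \<open>B\<^sub>u\<close> with \<open>A\<^bsub>F u\<^esub>\<close>, \<open>B\<^sub>u\<close> is spanned by
  the preimages of the monomials of degree \<open>F u\<close>. Writing \<open>u\<close> as a power product of generators of
  the weight monoid with exponents \<open>t\<close>, the exponent vectors \<open>(e, t)\<close> whose monomial has degree
  \<open>F u\<close> form a submonoid of \<open>\<nat>\<^sup>n\<close> which, by cancellation in \<open>K\<close>, is closed under differences;
  by Dickson's lemma it is generated by its finitely many minimal nonzero elements. Taking
  preimages is multiplicative on it, so the preimages of these minimal vectors generate \<open>B\<close>.\<close>

section \<open>Exponent vectors and Dickson's lemma\<close>

definition supported_on :: "'j set \<Rightarrow> ('j \<Rightarrow> nat) set" where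
  "supported_on J = {z. \<forall>j. j \<notin> J \<longrightarrow> z j = 0}"

lemma supported_on_nonzero: "z \<in> supported_on J \<Longrightarrow> z j \<noteq> 0 \<Longrightarrow> j \<in> J"
  unfolding supported_on_def by auto

lemma plus_fun_comp: "(z + z') \<circ> f = (z \<circ> f) + (z' \<circ> f)"
  by (simp add: fun_eq_iff)

lemma nat_seq_has_mono_subseq:
  fixes s :: "nat \<Rightarrow> nat"
  obtains r :: "nat \<Rightarrow> nat" where "strict_mono r" "mono (s \<circ> r)"
proof -
  obtain f :: "nat \<Rightarrow> nat" where f: "strict_mono f" "monoseq (s \<circ> f)"
    using seq_monosub by (auto simp: comp_def)
  show thesis
  proof (cases "incseq (s \<circ> f)")
    case True
    then show thesis using that[OF f(1)] by (simp add: mono_def incseq_def)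
  next
    case False
    then have dec: "decseq (s \<circ> f)" using f(2) monoseq_iff by blast
    define v where "v = (LEAST v. v \<in> range (s \<circ> f))"
    obtain N where N: "s (f N) = v"
      using LeastI[of "\<lambda>v. v \<in> range (s \<circ> f)" "s (f 0)"] unfolding v_def by auto
    have "s (f n) = v" if "n \<ge> N" for n
    proof -
      have "s (f n) \<le> s (f N)" using dec that by (auto simp: decseq_def)
      moreover have "v \<le> s (f n)" unfolding v_def by (rule Least_le) auto
      ultimately show ?thesis using N by simp
    qed
    then have "mono (s \<circ> (\<lambda>n. f (n + N)))" by (simp add: mono_def)
    moreover have "strict_mono (\<lambda>n. f (n + N))" using f(1) by (simp add: strict_mono_def)
    ultimately show thesis using that by blast
  qed
qed

lemma finitely_many_coordinates_mono_subseq: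
  fixes f :: "nat \<Rightarrow> 'j \<Rightarrow> nat"
  assumes "finite J"
  obtains r :: "nat \<Rightarrow> nat" where "strict_mono r" "\<And>j. j \<in> J \<Longrightarrow> mono (\<lambda>n. f (r n) j)"
  using assms
proof (induction J arbitrary: thesis rule: finite_induct)
  case empty
  show ?case by (rule empty.prems[where r=id]) (auto simp: strict_mono_def)
next
  case (insert j J)
  obtain r1 :: "nat \<Rightarrow> nat" where r1: "strict_mono r1" "\<And>j. j \<in> J \<Longrightarrow> mono (\<lambda>n. f (r1 n) j)"
    using insert.IH by blast
  obtain r2 :: "nat \<Rightarrow> nat" where r2: "strict_mono r2" "mono ((\<lambda>n. f (r1 n) j) \<circ> r2)"
    using nat_seq_has_mono_subseq by blast
  have "mono (\<lambda>n. f (r1 (r2 n)) j')" if "j' \<in> J" for j'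
    using r1(2)[OF that] strict_mono_mono[OF r2(1)] by (auto simp: mono_def)
  moreover have "strict_mono (r1 \<circ> r2)" using r1(1) r2(1) by (simp add: strict_mono_def)
  ultimately show ?case
    using r2(2) by (intro insert.prems[of "r1 \<circ> r2"]) (auto simp: comp_def)
qed

lemma finite_minimal_elements:
  fixes Z :: "('j \<Rightarrow> nat) set"
  assumes J: "finite J" and Z: "Z \<subseteq> supported_on J"
  shows "finite {m\<in>Z. \<forall>y\<in>Z. y \<le> m \<longrightarrow> y = m}"
proof (rule ccontr)
  let ?Min = "{m\<in>Z. \<forall>y\<in>Z. y \<le> m \<longrightarrow> y = m}"
  assume "infinite ?Min"
  then obtain g :: "nat \<Rightarrow> 'j \<Rightarrow> nat" where g: "inj g" "range g \<subseteq> ?Min"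
    using infinite_countable_subset by blast
  obtain r :: "nat \<Rightarrow> nat" where r: "strict_mono r" "\<And>j. j \<in> J \<Longrightarrow> mono (\<lambda>n. g (r n) j)"
    using finitely_many_coordinates_mono_subseq[OF J] by blast
  have "g (r 0) j \<le> g (r 1) j" for j
  proof (cases "j \<in> J")
    case True
    then show ?thesis using r(2) by (auto simp: mono_def)
  next
    case False
    have "g (r 0) \<in> supported_on J" using g(2) Z by blast
    then show ?thesis using False by (simp add: supported_on_def)
  qed
  then have "g (r 0) \<le> g (r 1)" by (simp add: le_fun_def)
  moreover have "g (r 0) \<in> Z" "g (r 1) \<in> ?Min" using g(2) by auto
  ultimately have "g (r 0) = g (r 1)" by blast
  then show False using g(1) r(1) by (simp add: inj_eq strict_mono_eq)
qed

lemma minimal_element_below: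
  assumes "finite J" and Z: "Z \<subseteq> supported_on J" and "x \<in> Z"
  obtains m where "m \<in> Z" "\<forall>y\<in>Z. y \<le> m \<longrightarrow> y = m" "m \<le> x"
  using \<open>x \<in> Z\<close>
proof (induction x rule: measure_induct_rule[of "\<lambda>z. sum z J"])
  case (less x)
  show ?case
  proof (cases "\<forall>y\<in>Z. y \<le> x \<longrightarrow> y = x")
    case True
    then show ?thesis using less.prems by blast
  next
    case False
    then obtain y where y: "y \<in> Z" "y \<le> x" "y \<noteq> x" by blast
    then obtain j where j: "y j < x j" by (auto simp: le_fun_def fun_eq_iff order_less_le)
    have "x \<in> supported_on J" using Z less.prems by blast
    moreover have "x j \<noteq> 0" using j by simp
    ultimately have "j \<in> J" by (rule supported_on_nonzero)
    then have "sum y J < sum x J"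
      using y(2) j by (intro sum_strict_mono_ex1[OF \<open>finite J\<close>]) (auto simp: le_fun_def)
    then show ?thesis
      using less.IH[of y] y(1,2) less.prems(1) order_trans by blast
  qed
qed

lemma saturated_monoid_finitely_generated:
  fixes M :: "('j \<Rightarrow> nat) set"
  assumes J: "finite J" and M: "M \<subseteq> supported_on J"
    and diff: "\<And>m z. m \<in> M \<Longrightarrow> z \<in> M \<Longrightarrow> m \<le> z \<Longrightarrow> z - m \<in> M"
  obtains G where "finite G" "G \<subseteq> M" "\<And>z. z \<in> M \<Longrightarrow> \<exists>gs. set gs \<subseteq> G \<and> z = sum_list gs"
proof
  let ?X = "M - {0}"
  let ?G = "{m\<in>?X. \<forall>y\<in>?X. y \<le> m \<longrightarrow> y = m}"
  have X: "?X \<subseteq> supported_on J" using M by blast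
  show "finite ?G" using finite_minimal_elements[OF J X] .
  show "?G \<subseteq> M" by blast
  fix z assume "z \<in> M"
  then show "\<exists>gs. set gs \<subseteq> ?G \<and> z = sum_list gs"
  proof (induction z rule: measure_induct_rule[of "\<lambda>z. sum z J"])
    case (less z)
    show ?case
    proof (cases "z = 0")
      case True
      then show ?thesis by (intro exI[of _ "[]"]) simp
    next
      case False
      then have "z \<in> ?X" using less.prems by blast
      then obtain m where m: "m \<in> ?X" "\<forall>y\<in>?X. y \<le> m \<longrightarrow> y = m" "m \<le> z"
        using minimal_element_below[OF J X] by blast
      then have mG: "m \<in> ?G" by blast
      have mJ: "m \<in> supported_on J" using m(1) X by blast
      obtain j where j: "m j \<noteq> 0" using m(1) by (auto simp: fun_eq_iff)
      have "m j \<le> z j" using m(3) by (simp add: le_fun_def)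
      with j have "(z - m) j < z j" by simp
      then have "sum (z - m) J < sum z J"
        using supported_on_nonzero[OF mJ j] by (intro sum_strict_mono_ex1[OF J]) auto
      moreover have "z - m \<in> M" using diff m(1,3) less.prems by blast
      ultimately obtain gs where gs: "set gs \<subseteq> ?G" "z - m = sum_list gs" using less.IH by blast
      have "sum_list (m # gs) = m + (z - m)" using gs(2) by simp
      also have "\<dots> = z" using m(3) by (auto simp: le_fun_def fun_eq_iff)
      finally have "z = sum_list (m # gs)" by (rule sym)
      moreover have "set (m # gs) \<subseteq> ?G"
        by (simp only: list.set(2) insert_subset) (rule conjI[OF mG gs(1)])
      ultimately show ?thesis by blast
    qed
  qed
qed

section \<open>Power products\<close>

definition power_prod :: "('x,'s) monoid_scheme \<Rightarrow> ('j \<Rightarrow> 'x) \<Rightarrow> 'j set \<Rightarrow> ('j \<Rightarrow> nat) \<Rightarrow> 'x" where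
  "power_prod G v J e = finprod G (\<lambda>j. v j [^]\<^bsub>G\<^esub> e j) J"

context comm_monoid
begin

lemma power_prod_closed: "v \<in> J \<rightarrow> carrier G \<Longrightarrow> power_prod G v J e \<in> carrier G"
  unfolding power_prod_def by (intro finprod_closed) auto

lemma power_prod_add:
  assumes "v \<in> J \<rightarrow> carrier G"
  shows "power_prod G v J (e + e') = power_prod G v J e \<otimes> power_prod G v J e'"
proof -
  have "power_prod G v J (e + e') = (\<Otimes>j\<in>J. v j [^] e j \<otimes> v j [^] e' j)"
    unfolding power_prod_def using assms by (intro finprod_cong') (auto simp: nat_pow_mult Pi_def)
  also have "\<dots> = power_prod G v J e \<otimes> power_prod G v J e'"
    unfolding power_prod_def using assms by (intro finprod_multf) auto
  finally show ?thesis .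
qed

lemma power_prod_zero: "power_prod G v J (\<lambda>_. 0) = \<one>"
  unfolding power_prod_def by simp

lemma power_prod_single:
  assumes "finite J" "j0 \<in> J" "v \<in> J \<rightarrow> carrier G"
  shows "power_prod G v J (\<lambda>j. if j = j0 then 1 else 0) = v j0"
proof -
  have "power_prod G v J (\<lambda>j. if j = j0 then 1 else 0) = (\<Otimes>j\<in>J. if j0 = j then v j else \<one>)"
    unfolding power_prod_def using assms(3) by (intro finprod_cong') (auto simp: Pi_def)
  also have "\<dots> = v j0" using finprod_singleton[OF assms(2,1,3)] .
  finally show ?thesis .
qed

lemma one_mem_power_prods: "\<one> \<in> power_prod G v J ` supported_on J"
proof -
  have "power_prod G v J (\<lambda>_. 0) \<in> power_prod G v J ` supported_on J"
    by (rule imageI) (simp add: supported_on_def)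
  then show ?thesis by (simp only: power_prod_zero)
qed

lemma power_prods_mult_closed:
  assumes v: "v \<in> J \<rightarrow> carrier G"
    and m: "m \<in> power_prod G v J ` supported_on J" and m': "m' \<in> power_prod G v J ` supported_on J"
  shows "m \<otimes> m' \<in> power_prod G v J ` supported_on J"
proof -
  obtain e e' where "e \<in> supported_on J" "e' \<in> supported_on J"
    "m = power_prod G v J e" "m' = power_prod G v J e'"
    using m m' by blast
  moreover have "e + e' \<in> supported_on J"
    using calculation(1,2) by (simp add: supported_on_def)
  ultimately show ?thesis using power_prod_add[OF v, of e e'] by (metis image_eqI)
qed

lemma mon_gen_subset_power_prods:
  assumes T: "finite T" "T \<subseteq> carrier G"
  shows "u \<in> mon_gen G T \<Longrightarrow> \<exists>t\<in>supported_on T. power_prod G (\<lambda>t. t) T t = u"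
proof (induction rule: mon_gen.induct)
  case one
  show ?case by (intro bexI[of _ "\<lambda>_. 0"]) (auto simp: supported_on_def power_prod_zero)
next
  case (incl t)
  then show ?case using T power_prod_single[of T t "\<lambda>t. t"]
    by (intro bexI[of _ "\<lambda>s. if s = t then 1 else 0"]) (auto simp: supported_on_def)
next
  case (mult x y)
  then obtain a b where "a \<in> supported_on T" "power_prod G (\<lambda>t. t) T a = x"
    "b \<in> supported_on T" "power_prod G (\<lambda>t. t) T b = y" by blast
  then show ?case using T power_prod_add[of "\<lambda>t. t" T a b]
    by (intro bexI[of _ "a + b"]) (auto simp: supported_on_def plus_fun_def)
qed

end

section \<open>Linear spans over the ground ring\<close>

inductive_set r_span :: "('r,'m) ring_scheme \<Rightarrow> ('a,'n) ring_scheme \<Rightarrow> ('r \<Rightarrow> 'a) \<Rightarrow> 'a set \<Rightarrow> 'a set"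
  for R A \<iota> M where
  zero: "\<zero>\<^bsub>A\<^esub> \<in> r_span R A \<iota> M"
| add_smult: "r \<in> carrier R \<Longrightarrow> m \<in> M \<Longrightarrow> s \<in> r_span R A \<iota> M \<Longrightarrow> \<iota> r \<otimes>\<^bsub>A\<^esub> m \<oplus>\<^bsub>A\<^esub> s \<in> r_span R A \<iota> M"

context ring_hom_cring
begin

lemma r_span_closed:
  assumes "M \<subseteq> carrier S"
  shows "s \<in> r_span R S h M \<Longrightarrow> s \<in> carrier S"
  by (induction rule: r_span.induct) (use assms in auto)

lemma smult_mem_r_span:
  assumes "r \<in> carrier R" "m \<in> M" "M \<subseteq> carrier S"
  shows "h r \<otimes>\<^bsub>S\<^esub> m \<in> r_span R S h M"
proof -
  have "h r \<otimes>\<^bsub>S\<^esub> m \<oplus>\<^bsub>S\<^esub> \<zero>\<^bsub>S\<^esub> \<in> r_span R S h M"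
    by (rule r_span.add_smult[OF assms(1,2) r_span.zero])
  then show ?thesis using assms by auto
qed

lemma mem_r_span: "m \<in> M \<Longrightarrow> M \<subseteq> carrier S \<Longrightarrow> m \<in> r_span R S h M"
  using smult_mem_r_span[OF R.one_closed] by fastforce

lemma r_span_add:
  assumes M: "M \<subseteq> carrier S"
  shows "s \<in> r_span R S h M \<Longrightarrow> t \<in> r_span R S h M \<Longrightarrow> s \<oplus>\<^bsub>S\<^esub> t \<in> r_span R S h M"
proof (induction rule: r_span.induct)
  case zero
  then show ?case using r_span_closed[OF M] by simp
next
  case (add_smult r m s)
  then show ?case using r_span_closed[OF M] M
    by (metis S.a_assoc S.m_closed hom_closed r_span.add_smult subsetD)
qed

lemma r_span_uminus:
  assumes M: "M \<subseteq> carrier S"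
  shows "s \<in> r_span R S h M \<Longrightarrow> \<ominus>\<^bsub>S\<^esub> s \<in> r_span R S h M"
proof (induction rule: r_span.induct)
  case zero
  then show ?case by (simp add: r_span.zero)
next
  case (add_smult r m s)
  have "h (\<ominus>\<^bsub>R\<^esub> r) \<otimes>\<^bsub>S\<^esub> m \<oplus>\<^bsub>S\<^esub> \<ominus>\<^bsub>S\<^esub> s \<in> r_span R S h M"
    using add_smult by (intro r_span.add_smult) auto
  moreover have "h (\<ominus>\<^bsub>R\<^esub> r) \<otimes>\<^bsub>S\<^esub> m \<oplus>\<^bsub>S\<^esub> \<ominus>\<^bsub>S\<^esub> s = \<ominus>\<^bsub>S\<^esub> (h r \<otimes>\<^bsub>S\<^esub> m \<oplus>\<^bsub>S\<^esub> s)"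
    using add_smult r_span_closed[OF M] M by (auto simp: S.minus_add S.l_minus)
  ultimately show ?case by simp
qed

lemma r_span_mult:
  assumes M: "M \<subseteq> carrier S" and mult: "\<And>m m'. m \<in> M \<Longrightarrow> m' \<in> M \<Longrightarrow> m \<otimes>\<^bsub>S\<^esub> m' \<in> M"
    and s: "s \<in> r_span R S h M"
  shows "t \<in> r_span R S h M \<Longrightarrow> s \<otimes>\<^bsub>S\<^esub> t \<in> r_span R S h M"
  using s
proof (induction arbitrary: t rule: r_span.induct)
  case zero
  then show ?case using r_span_closed[OF M] by (simp add: r_span.zero)
next
  case (add_smult r m s)
  have mt: "(h r \<otimes>\<^bsub>S\<^esub> m) \<otimes>\<^bsub>S\<^esub> t \<in> r_span R S h M"
    using add_smult.prems
  proof (induction rule: r_span.induct)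
    case zero
    have "m \<in> carrier S" using add_smult(2) M by blast
    then show ?case using add_smult(1) by (simp add: r_span.zero)
  next
    case (add_smult r' m' s')
    have "(h r \<otimes>\<^bsub>S\<^esub> m) \<otimes>\<^bsub>S\<^esub> (h r' \<otimes>\<^bsub>S\<^esub> m' \<oplus>\<^bsub>S\<^esub> s')
        = h (r \<otimes>\<^bsub>R\<^esub> r') \<otimes>\<^bsub>S\<^esub> (m \<otimes>\<^bsub>S\<^esub> m') \<oplus>\<^bsub>S\<^esub> (h r \<otimes>\<^bsub>S\<^esub> m) \<otimes>\<^bsub>S\<^esub> s'"
    proof -
      have "m \<in> carrier S" "m' \<in> carrier S" "s' \<in> carrier S"
        using add_smult.hyps \<open>m \<in> M\<close> r_span_closed[OF M] M by auto
      then show ?thesis using add_smult.hyps \<open>r \<in> carrier R\<close> by (simp add: S.r_distr S.m_ac)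
    qed
    then show ?case
      using r_span.add_smult[OF R.m_closed[OF \<open>r \<in> carrier R\<close> add_smult.hyps(1)]
          mult[OF \<open>m \<in> M\<close> add_smult.hyps(2)] add_smult.IH]
      by simp
  qed
  have "(h r \<otimes>\<^bsub>S\<^esub> m \<oplus>\<^bsub>S\<^esub> s) \<otimes>\<^bsub>S\<^esub> t = (h r \<otimes>\<^bsub>S\<^esub> m) \<otimes>\<^bsub>S\<^esub> t \<oplus>\<^bsub>S\<^esub> s \<otimes>\<^bsub>S\<^esub> t"
    using add_smult r_span_closed[OF M] M by (auto simp: S.l_distr)
  then show ?case using r_span_add[OF M mt] add_smult by simp
qed

lemma r_span_subset_submodule:
  assumes "r_submodule R S h N" "M \<subseteq> N"
  shows "r_span R S h M \<subseteq> N"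
proof
  show "s \<in> N" if "s \<in> r_span R S h M" for s
    using that assms by (induction rule: r_span.induct) (auto simp: r_submodule_def)
qed

lemma generate_ring_subset_r_span:
  assumes M: "M \<subseteq> carrier S" "\<one>\<^bsub>S\<^esub> \<in> M" "\<And>m m'. m \<in> M \<Longrightarrow> m' \<in> M \<Longrightarrow> m \<otimes>\<^bsub>S\<^esub> m' \<in> M"
    and Y: "Y \<subseteq> r_span R S h M"
  shows "generate_ring S (h ` carrier R \<union> Y) \<subseteq> r_span R S h M"
proof
  have scalars: "h r \<in> r_span R S h M" if "r \<in> carrier R" for r
    using smult_mem_r_span[OF that M(2,1)] that by simp
  show "x \<in> r_span R S h M" if "x \<in> generate_ring S (h ` carrier R \<union> Y)" for x
    using that
  proof (induction rule: generate_ring.induct)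
    case one
    then show ?case using scalars[of "\<one>\<^bsub>R\<^esub>"] by simp
  qed (use scalars Y r_span_uminus[OF M(1)] r_span_add[OF M(1)] r_span_mult[OF M(1,3)] in auto)
qed

lemma r_span_subset_generate_ring:
  assumes "Y \<subseteq> carrier S" "M \<subseteq> generate_ring S (h ` carrier R \<union> Y)"
  shows "r_span R S h M \<subseteq> generate_ring S (h ` carrier R \<union> Y)"
proof
  show "s \<in> generate_ring S (h ` carrier R \<union> Y)" if "s \<in> r_span R S h M" for s
    using that assms(2)
  proof (induction rule: r_span.induct)
    case zero
    show ?case by (rule S.zero_in_generate)
  next
    case (add_smult r m s)
    then show ?case by (auto intro: generate_ring.intros)
  qed
qed

end

section \<open>Homogeneous components\<close>

lemma (in abelian_monoid) finsum_mem_subset: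
  assumes "finite D" "S \<subseteq> carrier G" "\<zero> \<in> S"
    "\<And>x y. x \<in> S \<Longrightarrow> y \<in> S \<Longrightarrow> x \<oplus> y \<in> S" "\<And>i. i \<in> D \<Longrightarrow> f i \<in> S"
  shows "finsum G f D \<in> S"
  using assms(1,5)
proof (induction D rule: finite_induct)
  case empty
  then show ?case using assms(3) by simp
next
  case (insert i D)
  have fi: "f i \<in> S" and fD: "finsum G f D \<in> S"
    using insert.prems insert.IH by auto
  have eq: "finsum G f (insert i D) = f i \<oplus> finsum G f D"
    using insert.hyps insert.prems assms(2) by (intro finsum_insert) blast+
  have "f i \<oplus> finsum G f D \<in> S" by (rule assms(4)[OF fi fD])
  then show ?case unfolding eq .
qed

locale graded =
  fixes R :: "('r,'m) ring_scheme" and A :: "('a,'n) ring_scheme" and \<iota> :: "'r \<Rightarrow> 'a"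
    and K :: "('k,'p) monoid_scheme" and Ag :: "'k \<Rightarrow> 'a set"
  assumes graded: "graded_algebra R A \<iota> K Ag"
begin

sublocale H: ring_hom_cring R A \<iota>
  using graded by (simp add: graded_algebra_def r_algebra_def ring_hom_cring_def ring_hom_cring_axioms_def)

sublocale K: comm_monoid K
  using graded by (simp add: graded_algebra_def)

lemma Ag_submodule: "w \<in> carrier K \<Longrightarrow> r_submodule R A \<iota> (Ag w)"
  using graded by (simp add: graded_algebra_def)

lemma Ag_carrier: "w \<in> carrier K \<Longrightarrow> Ag w \<subseteq> carrier A"
  using Ag_submodule by (simp add: r_submodule_def)

lemma Ag_zero: "w \<in> carrier K \<Longrightarrow> \<zero>\<^bsub>A\<^esub> \<in> Ag w"
  using Ag_submodule by (simp add: r_submodule_def)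

lemma Ag_add: "w \<in> carrier K \<Longrightarrow> x \<in> Ag w \<Longrightarrow> y \<in> Ag w \<Longrightarrow> x \<oplus>\<^bsub>A\<^esub> y \<in> Ag w"
  using Ag_submodule by (simp add: r_submodule_def)

lemma Ag_smult: "w \<in> carrier K \<Longrightarrow> r \<in> carrier R \<Longrightarrow> x \<in> Ag w \<Longrightarrow> \<iota> r \<otimes>\<^bsub>A\<^esub> x \<in> Ag w"
  using Ag_submodule by (simp add: r_submodule_def)

lemma Ag_mult:
  "w \<in> carrier K \<Longrightarrow> w' \<in> carrier K \<Longrightarrow> x \<in> Ag w \<Longrightarrow> y \<in> Ag w' \<Longrightarrow> x \<otimes>\<^bsub>A\<^esub> y \<in> Ag (w \<otimes>\<^bsub>K\<^esub> w')"
  using graded by (simp add: graded_algebra_def)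

definition homogeneous_family :: "('k \<Rightarrow> 'a) \<Rightarrow> bool" where
  "homogeneous_family c \<longleftrightarrow> (\<forall>w\<in>carrier K. c w \<in> Ag w) \<and> (\<forall>w. w \<notin> carrier K \<longrightarrow> c w = \<zero>\<^bsub>A\<^esub>)
      \<and> finite {w. c w \<noteq> \<zero>\<^bsub>A\<^esub>}"

definition hcomp :: "'a \<Rightarrow> 'k \<Rightarrow> 'a" where
  "hcomp a = (THE c. homogeneous_family c \<and> a = finsum A c {w. c w \<noteq> \<zero>\<^bsub>A\<^esub>})"

definition hsupp :: "'a \<Rightarrow> 'k set" where
  "hsupp a = {w. hcomp a w \<noteq> \<zero>\<^bsub>A\<^esub>}"

lemma homogeneous_family_carrier: "homogeneous_family c \<Longrightarrow> c w \<in> carrier A"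
  unfolding homogeneous_family_def using Ag_carrier by (cases "w \<in> carrier K") auto

lemma finsum_homogeneous_family_superset:
  assumes "homogeneous_family c" "finite D" "{w. c w \<noteq> \<zero>\<^bsub>A\<^esub>} \<subseteq> D"
  shows "finsum A c D = finsum A c {w. c w \<noteq> \<zero>\<^bsub>A\<^esub>}"
  using assms by (intro H.S.add.finprod_mono_neutral_cong_right) (auto simp: homogeneous_family_carrier)

lemma decomposition_unique:
  "a \<in> carrier A \<Longrightarrow> \<exists>!c. homogeneous_family c \<and> a = finsum A c {w. c w \<noteq> \<zero>\<^bsub>A\<^esub>}"
  using graded unfolding graded_algebra_def homogeneous_family_def by blast

lemma hcomp_family: "a \<in> carrier A \<Longrightarrow> homogeneous_family (hcomp a)"
  and finsum_hcomp: "a \<in> carrier A \<Longrightarrow> finsum A (hcomp a) (hsupp a) = a"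
  using theI'[OF decomposition_unique] unfolding hcomp_def hsupp_def by auto

lemma hcomp_mem: "a \<in> carrier A \<Longrightarrow> w \<in> carrier K \<Longrightarrow> hcomp a w \<in> Ag w"
  and hcomp_carrier: "a \<in> carrier A \<Longrightarrow> hcomp a w \<in> carrier A"
  and finite_hsupp: "a \<in> carrier A \<Longrightarrow> finite (hsupp a)"
  and hsupp_subset: "a \<in> carrier A \<Longrightarrow> hsupp a \<subseteq> carrier K"
  using hcomp_family homogeneous_family_carrier
  unfolding homogeneous_family_def hsupp_def by blast+

lemma finsum_hcomp_superset:
  assumes "a \<in> carrier A" "finite D" "hsupp a \<subseteq> D"
  shows "finsum A (hcomp a) D = a"
  using finsum_homogeneous_family_superset[OF hcomp_family[OF assms(1)] assms(2)] assms(3)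
    finsum_hcomp[OF assms(1)] by (simp add: hsupp_def)

lemma hcomp_eqI:
  assumes "homogeneous_family c" "finite D" "{w. c w \<noteq> \<zero>\<^bsub>A\<^esub>} \<subseteq> D" "a = finsum A c D"
  shows "hcomp a = c"
proof -
  have a: "a \<in> carrier A"
    using assms by (auto intro: H.S.finsum_closed simp: homogeneous_family_carrier)
  show ?thesis
    unfolding hcomp_def using assms finsum_homogeneous_family_superset
    by (intro the1_equality[OF decomposition_unique[OF a]]) auto
qed

lemma hcomp_homogeneous:
  assumes "v \<in> carrier K" "x \<in> Ag v"
  shows "hcomp x = (\<lambda>w. if w = v then x else \<zero>\<^bsub>A\<^esub>)"
proof (rule hcomp_eqI[where D = "{v}"])
  show "homogeneous_family (\<lambda>w. if w = v then x else \<zero>\<^bsub>A\<^esub>)"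
    unfolding homogeneous_family_def using assms Ag_zero by (auto intro: finite_subset[of _ "{v}"])
qed (use assms Ag_carrier[OF assms(1)] in auto)

lemma hcomp_zero: "hcomp \<zero>\<^bsub>A\<^esub> = (\<lambda>_. \<zero>\<^bsub>A\<^esub>)"
  using hcomp_homogeneous[OF K.one_closed Ag_zero[OF K.one_closed]] by auto

lemma hcomp_add:
  assumes a: "a \<in> carrier A" and b: "b \<in> carrier A"
  shows "hcomp (a \<oplus>\<^bsub>A\<^esub> b) = (\<lambda>w. hcomp a w \<oplus>\<^bsub>A\<^esub> hcomp b w)"
proof (rule hcomp_eqI)
  let ?D = "hsupp a \<union> hsupp b"
  show "finite ?D" using finite_hsupp a b by blast
  show supp: "{w. hcomp a w \<oplus>\<^bsub>A\<^esub> hcomp b w \<noteq> \<zero>\<^bsub>A\<^esub>} \<subseteq> ?D"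
    using hcomp_carrier a b by (auto simp: hsupp_def)
  show "homogeneous_family (\<lambda>w. hcomp a w \<oplus>\<^bsub>A\<^esub> hcomp b w)"
    unfolding homogeneous_family_def
  proof (intro conjI)
    show "\<forall>w\<in>carrier K. hcomp a w \<oplus>\<^bsub>A\<^esub> hcomp b w \<in> Ag w"
      using hcomp_mem a b Ag_add by blast
    show "\<forall>w. w \<notin> carrier K \<longrightarrow> hcomp a w \<oplus>\<^bsub>A\<^esub> hcomp b w = \<zero>\<^bsub>A\<^esub>"
      using hcomp_family[OF a] hcomp_family[OF b] by (auto simp: homogeneous_family_def)
    show "finite {w. hcomp a w \<oplus>\<^bsub>A\<^esub> hcomp b w \<noteq> \<zero>\<^bsub>A\<^esub>}"
      using supp \<open>finite ?D\<close> by (rule finite_subset)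
  qed
  have "a = finsum A (hcomp a) ?D" "b = finsum A (hcomp b) ?D"
    using finsum_hcomp_superset[OF _ \<open>finite ?D\<close>] a b by auto
  then show "a \<oplus>\<^bsub>A\<^esub> b = finsum A (\<lambda>w. hcomp a w \<oplus>\<^bsub>A\<^esub> hcomp b w) ?D"
    using hcomp_carrier a b by (simp add: H.S.finsum_addf)
qed

lemma hcomp_finsum:
  assumes "finite D" "f \<in> D \<rightarrow> carrier A"
  shows "hcomp (finsum A f D) w = finsum A (\<lambda>i. hcomp (f i) w) D"
  using assms
proof (induction D rule: finite_induct)
  case empty
  then show ?case by (simp add: hcomp_zero)
next
  case (insert i D)
  then have "hcomp (finsum A f (insert i D)) w = hcomp (f i) w \<oplus>\<^bsub>A\<^esub> hcomp (finsum A f D) w"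
    by (simp add: H.S.finsum_insert hcomp_add H.S.finsum_closed)
  with insert show ?case by (simp add: H.S.finsum_insert hcomp_carrier Pi_def)
qed

lemma mem_if_hcomps_mem:
  assumes "a \<in> carrier A" "S \<subseteq> carrier A" "\<zero>\<^bsub>A\<^esub> \<in> S"
    "\<And>x y. x \<in> S \<Longrightarrow> y \<in> S \<Longrightarrow> x \<oplus>\<^bsub>A\<^esub> y \<in> S" "\<And>w. w \<in> hsupp a \<Longrightarrow> hcomp a w \<in> S"
  shows "a \<in> S"
  using H.S.finsum_mem_subset[where f = "hcomp a", OF finite_hsupp[OF assms(1)] assms(2-5)]
    finsum_hcomp[OF assms(1)]
  by simp

lemma hcomp_mult_homogeneous:
  assumes cancel: "cancel_comm_monoid K"
    and v: "v \<in> carrier K" "x \<in> Ag v" and a: "a \<in> carrier A" and w: "w \<in> carrier K"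
  shows "hcomp (x \<otimes>\<^bsub>A\<^esub> a) (v \<otimes>\<^bsub>K\<^esub> w) = x \<otimes>\<^bsub>A\<^esub> hcomp a w"
proof -
  let ?D = "insert w (hsupp a)"
  have D: "finite ?D" "?D \<subseteq> carrier K" using finite_hsupp[OF a] hsupp_subset[OF a] w by auto
  have x: "x \<in> carrier A" using v Ag_carrier by blast
  have "a = finsum A (hcomp a) ?D" using finsum_hcomp_superset[OF a D(1) subset_insertI] by simp
  then have "x \<otimes>\<^bsub>A\<^esub> a = finsum A (\<lambda>w'. x \<otimes>\<^bsub>A\<^esub> hcomp a w') ?D"
    using H.S.finsum_rdistr[OF D(1) x] hcomp_carrier[OF a] by (metis Pi_I)
  then have "hcomp (x \<otimes>\<^bsub>A\<^esub> a) (v \<otimes>\<^bsub>K\<^esub> w)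
      = finsum A (\<lambda>w'. hcomp (x \<otimes>\<^bsub>A\<^esub> hcomp a w') (v \<otimes>\<^bsub>K\<^esub> w)) ?D"
    using hcomp_finsum[OF D(1)] x hcomp_carrier[OF a] by simp
  also have "\<dots> = finsum A (\<lambda>w'. if w = w' then x \<otimes>\<^bsub>A\<^esub> hcomp a w' else \<zero>\<^bsub>A\<^esub>) ?D"
  proof (intro H.S.finsum_cong')
    fix w' assume "w' \<in> ?D"
    then have w': "w' \<in> carrier K" using D(2) by blast
    have "x \<otimes>\<^bsub>A\<^esub> hcomp a w' \<in> Ag (v \<otimes>\<^bsub>K\<^esub> w')"
      using Ag_mult[OF v(1) w' v(2) hcomp_mem[OF a w']] .
    then have "hcomp (x \<otimes>\<^bsub>A\<^esub> hcomp a w') (v \<otimes>\<^bsub>K\<^esub> w)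
        = (if v \<otimes>\<^bsub>K\<^esub> w = v \<otimes>\<^bsub>K\<^esub> w' then x \<otimes>\<^bsub>A\<^esub> hcomp a w' else \<zero>\<^bsub>A\<^esub>)"
      using hcomp_homogeneous[OF K.m_closed[OF v(1) w']] by simp
    moreover have "v \<otimes>\<^bsub>K\<^esub> w = v \<otimes>\<^bsub>K\<^esub> w' \<longleftrightarrow> w = w'"
      using cancel v(1) w w' unfolding cancel_comm_monoid_def by blast
    ultimately show "hcomp (x \<otimes>\<^bsub>A\<^esub> hcomp a w') (v \<otimes>\<^bsub>K\<^esub> w)
        = (if w = w' then x \<otimes>\<^bsub>A\<^esub> hcomp a w' else \<zero>\<^bsub>A\<^esub>)"
      by simp
  qed (use x hcomp_carrier[OF a] in auto)
  also have "\<dots> = x \<otimes>\<^bsub>A\<^esub> hcomp a w"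
    using H.S.add.finprod_singleton[of w ?D] D(1) x hcomp_carrier[OF a] by auto
  finally show ?thesis .
qed

text \<open>If a component \<open>c\<close> of \<open>\<one>\<close> of degree \<open>w \<noteq> \<one>\<close> were nonzero, then \<open>c \<otimes> \<one> = c\<close>
  would have the component \<open>c \<otimes> c \<noteq> \<zero>\<close> in degree \<open>w \<otimes> w \<noteq> w\<close>.\<close>

lemma one_homogeneous:
  assumes "domain A" and cancel: "cancel_comm_monoid K"
  shows "\<one>\<^bsub>A\<^esub> \<in> Ag \<one>\<^bsub>K\<^esub>"
proof -
  have supp: "hsupp \<one>\<^bsub>A\<^esub> \<subseteq> {\<one>\<^bsub>K\<^esub>}"
  proof
    fix w assume w: "w \<in> hsupp \<one>\<^bsub>A\<^esub>"
    let ?c = "hcomp \<one>\<^bsub>A\<^esub> w"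
    have wK: "w \<in> carrier K" using w hsupp_subset by blast
    have c: "?c \<in> Ag w" "?c \<in> carrier A" "?c \<noteq> \<zero>\<^bsub>A\<^esub>"
      using hcomp_mem[OF _ wK] hcomp_carrier w by (auto simp: hsupp_def)
    have "?c \<otimes>\<^bsub>A\<^esub> ?c \<noteq> \<zero>\<^bsub>A\<^esub>" using domain.integral[OF assms(1) _ c(2) c(2)] c(3) by blast
    moreover have "hcomp ?c (w \<otimes>\<^bsub>K\<^esub> w) = ?c \<otimes>\<^bsub>A\<^esub> ?c"
      using hcomp_mult_homogeneous[OF cancel wK c(1) H.S.one_closed wK] c(2) by simp
    moreover have "hcomp ?c (w \<otimes>\<^bsub>K\<^esub> w) = (if w \<otimes>\<^bsub>K\<^esub> w = w then ?c else \<zero>\<^bsub>A\<^esub>)"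
      using hcomp_homogeneous[OF wK c(1)] by simp
    ultimately have "w \<otimes>\<^bsub>K\<^esub> w = w \<otimes>\<^bsub>K\<^esub> \<one>\<^bsub>K\<^esub>" using wK by (metis K.r_one)
    then show "w \<in> {\<one>\<^bsub>K\<^esub>}" using cancel wK unfolding cancel_comm_monoid_def by blast
  qed
  have "\<one>\<^bsub>A\<^esub> = finsum A (hcomp \<one>\<^bsub>A\<^esub>) {\<one>\<^bsub>K\<^esub>}"
    using finsum_hcomp_superset[OF H.S.one_closed _ supp] by simp
  then show ?thesis using hcomp_mem[OF H.S.one_closed K.one_closed] hcomp_carrier by simp
qed

end

section \<open>Homogeneous generators\<close>

context graded
begin

lemma nat_pow_homogeneous:
  assumes one: "\<one>\<^bsub>A\<^esub> \<in> Ag \<one>\<^bsub>K\<^esub>" and w: "w \<in> carrier K" and x: "x \<in> Ag w"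
  shows "x [^]\<^bsub>A\<^esub> (n::nat) \<in> Ag (w [^]\<^bsub>K\<^esub> n)"
proof (induction n)
  case 0
  then show ?case using one by simp
next
  case (Suc n)
  then show ?case using Ag_mult[OF K.nat_pow_closed[OF w] w Suc x] by simp
qed

lemma power_prod_homogeneous:
  assumes one: "\<one>\<^bsub>A\<^esub> \<in> Ag \<one>\<^bsub>K\<^esub>" and "finite I"
    and I: "\<And>i. i \<in> I \<Longrightarrow> fst i \<in> carrier K \<and> snd i \<in> Ag (fst i)"
  shows "power_prod A snd I e \<in> Ag (power_prod K fst I e)"
  using assms(2,3)
proof (induction I rule: finite_induct)
  case empty
  then show ?case using one by (simp add: power_prod_def)
next
  case (insert i I)
  have fst: "fst \<in> insert i I \<rightarrow> carrier K" and snd: "snd \<in> insert i I \<rightarrow> carrier A"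
    using insert.prems Ag_carrier by blast+
  have "power_prod A snd (insert i I) e = snd i [^]\<^bsub>A\<^esub> e i \<otimes>\<^bsub>A\<^esub> power_prod A snd I e"
    unfolding power_prod_def using insert.hyps snd by (subst H.S.finprod_insert) auto
  moreover have "power_prod K fst (insert i I) e = fst i [^]\<^bsub>K\<^esub> e i \<otimes>\<^bsub>K\<^esub> power_prod K fst I e"
    unfolding power_prod_def using insert.hyps fst by (subst K.finprod_insert) auto
  moreover have "snd i [^]\<^bsub>A\<^esub> e i \<in> Ag (fst i [^]\<^bsub>K\<^esub> e i)"
    using nat_pow_homogeneous[OF one] insert.prems by blast
  moreover have "power_prod K fst I e \<in> carrier K"
    using fst by (intro K.power_prod_closed) auto
  ultimately show ?case
    using Ag_mult[OF K.nat_pow_closed] insert by (simp add: Pi_def)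
qed

lemma hcomp_r_span:
  assumes E: "\<And>e. e \<in> E \<Longrightarrow> dg e \<in> carrier K \<and> mn e \<in> Ag (dg e)" and w: "w \<in> carrier K"
  shows "s \<in> r_span R A \<iota> (mn ` E) \<Longrightarrow> hcomp s w \<in> r_span R A \<iota> (mn ` {e\<in>E. dg e = w})"
proof (induction rule: r_span.induct)
  case zero
  then show ?case by (simp add: hcomp_zero r_span.zero)
next
  case (add_smult r m s)
  have mn: "mn ` E \<subseteq> carrier A" "mn ` {e\<in>E. dg e = w} \<subseteq> carrier A" using E Ag_carrier by blast+
  obtain e where e: "e \<in> E" "m = mn e" using add_smult.hyps(2) by blast
  have dg: "dg e \<in> carrier K" using E e(1) by blast
  have rm: "\<iota> r \<otimes>\<^bsub>A\<^esub> m \<in> Ag (dg e)" using Ag_smult E e add_smult.hyps(1) by blast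
  then have rmc: "\<iota> r \<otimes>\<^bsub>A\<^esub> m \<in> carrier A" using Ag_carrier[OF dg] by blast
  have s: "s \<in> carrier A" using H.r_span_closed[OF mn(1) add_smult.hyps(3)] .
  have "hcomp (\<iota> r \<otimes>\<^bsub>A\<^esub> m \<oplus>\<^bsub>A\<^esub> s) w = hcomp (\<iota> r \<otimes>\<^bsub>A\<^esub> m) w \<oplus>\<^bsub>A\<^esub> hcomp s w"
    using hcomp_add[OF rmc s] by simp
  also have "hcomp (\<iota> r \<otimes>\<^bsub>A\<^esub> m) w = (if w = dg e then \<iota> r \<otimes>\<^bsub>A\<^esub> m else \<zero>\<^bsub>A\<^esub>)"
    using hcomp_homogeneous[OF dg rm] by simp
  finally have eq: "hcomp (\<iota> r \<otimes>\<^bsub>A\<^esub> m \<oplus>\<^bsub>A\<^esub> s) w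
      = (if w = dg e then \<iota> r \<otimes>\<^bsub>A\<^esub> m else \<zero>\<^bsub>A\<^esub>) \<oplus>\<^bsub>A\<^esub> hcomp s w" .
  show ?case
  proof (cases "w = dg e")
    case True
    then have "m \<in> mn ` {e\<in>E. dg e = w}" using e by blast
    with True show ?thesis
      using r_span.add_smult[OF add_smult.hyps(1) _ add_smult.IH] eq by simp
  next
    case False
    then show ?thesis using add_smult.IH hcomp_carrier[OF s] eq by simp
  qed
qed

lemma homogeneous_mem_r_span_monomials:
  assumes one: "\<one>\<^bsub>A\<^esub> \<in> Ag \<one>\<^bsub>K\<^esub>" and "finite I"
    and I: "\<And>i. i \<in> I \<Longrightarrow> fst i \<in> carrier K \<and> snd i \<in> Ag (fst i)"
    and span: "carrier A \<subseteq> r_span R A \<iota> (power_prod A snd I ` supported_on I)"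
    and w: "w \<in> carrier K" and x: "x \<in> Ag w"
  shows "x \<in> r_span R A \<iota> (power_prod A snd I ` {e \<in> supported_on I. power_prod K fst I e = w})"
proof -
  have fst: "fst \<in> I \<rightarrow> carrier K" using I by blast
  have "x \<in> carrier A" using x Ag_carrier[OF w] by blast
  then have "hcomp x w \<in> r_span R A \<iota> (power_prod A snd I ` {e \<in> supported_on I. power_prod K fst I e = w})"
    using span power_prod_homogeneous[OF one \<open>finite I\<close> I] K.power_prod_closed[OF fst]
    by (intro hcomp_r_span[OF _ w]) auto
  then show ?thesis using hcomp_homogeneous[OF w x] by simp
qed

lemma fg_algebra_homogeneous_generators:
  assumes "fg_algebra R A \<iota>"
  obtains I where "finite I" "\<And>i. i \<in> I \<Longrightarrow> fst i \<in> carrier K \<and> snd i \<in> Ag (fst i)"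
    "carrier A \<subseteq> r_span R A \<iota> (power_prod A snd I ` supported_on I)"
proof -
  obtain G where G: "finite G" "G \<subseteq> carrier A" "generate_ring A (\<iota> ` carrier R \<union> G) = carrier A"
    using assms by (auto simp: fg_algebra_def)
  define I where "I = (\<Union>g\<in>G. (\<lambda>w. (w, hcomp g w)) ` hsupp g)"
  define Mon where "Mon = power_prod A snd I ` supported_on I"
  have "finite I" unfolding I_def using G finite_hsupp by blast
  have I: "fst i \<in> carrier K \<and> snd i \<in> Ag (fst i)" if i: "i \<in> I" for i
  proof -
    obtain g w where g: "g \<in> G" "w \<in> hsupp g" "i = (w, hcomp g w)"
      using i unfolding I_def by blast
    then have "g \<in> carrier A" "w \<in> carrier K" using G(2) hsupp_subset by blast+
    then show ?thesis using g(3) hcomp_mem by simp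
  qed
  then have snd: "snd \<in> I \<rightarrow> carrier A" using Ag_carrier by blast
  have Mon: "Mon \<subseteq> carrier A" unfolding Mon_def using H.S.power_prod_closed[OF snd] by blast
  have "\<one>\<^bsub>A\<^esub> \<in> Mon" unfolding Mon_def by (rule H.S.one_mem_power_prods)
  moreover have "m \<otimes>\<^bsub>A\<^esub> m' \<in> Mon" if "m \<in> Mon" "m' \<in> Mon" for m m'
    using that unfolding Mon_def by (rule H.S.power_prods_mult_closed[OF snd])
  moreover have "G \<subseteq> r_span R A \<iota> Mon"
  proof
    fix g assume g: "g \<in> G"
    show "g \<in> r_span R A \<iota> Mon"
    proof (rule mem_if_hcomps_mem)
      fix w assume w: "w \<in> hsupp g"
      then have i: "(w, hcomp g w) \<in> I" unfolding I_def using g by blast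
      have "hcomp g w = power_prod A snd I (\<lambda>j. if j = (w, hcomp g w) then 1 else 0)"
        using H.S.power_prod_single[OF \<open>finite I\<close> i snd] by simp
      then have "hcomp g w \<in> Mon" unfolding Mon_def using i by (auto simp: supported_on_def)
      then show "hcomp g w \<in> r_span R A \<iota> Mon" using H.mem_r_span Mon by blast
    qed (use g G(2) H.r_span_closed[OF Mon] r_span.zero H.r_span_add[OF Mon] in auto)
  qed
  ultimately have "generate_ring A (\<iota> ` carrier R \<union> G) \<subseteq> r_span R A \<iota> Mon"
    using Mon by (intro H.generate_ring_subset_r_span) auto
  then show thesis using that[OF \<open>finite I\<close> I] G(3) unfolding Mon_def by blast
qed

end

section \<open>Lifting monomials along a degreewise bijective morphism\<close>

locale degreewise_bijective_morphism =
  GB: graded R B \<iota>B L Bg + GA: graded R A \<iota>A K Ag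
  for R :: "('r,'m) ring_scheme"
    and B :: "('b,'n) ring_scheme" and \<iota>B :: "'r \<Rightarrow> 'b" and L :: "('l,'p) monoid_scheme" and Bg
    and A :: "('a,'q) ring_scheme" and \<iota>A :: "'r \<Rightarrow> 'a" and K :: "('k,'s) monoid_scheme" and Ag +
  fixes \<phi> :: "'b \<Rightarrow> 'a" and F :: "'l \<Rightarrow> 'k"
  assumes morphism: "graded_morphism R B \<iota>B L Bg A \<iota>A K Ag \<phi> F"
    and bij: "\<And>u. u \<in> carrier L \<Longrightarrow> bij_betw \<phi> (Bg u) (Ag (F u))"
    and cancel_K: "cancel_comm_monoid K"
    and one_A: "\<one>\<^bsub>A\<^esub> \<in> Ag \<one>\<^bsub>K\<^esub>"
begin

sublocale P: ring_hom_cring B A \<phi>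
  using morphism GB.H.S.is_cring GA.H.S.is_cring
  by (simp add: graded_morphism_def ring_hom_cring_def ring_hom_cring_axioms_def)

lemma phi_scalar: "r \<in> carrier R \<Longrightarrow> \<phi> (\<iota>B r) = \<iota>A r"
  and F_closed: "u \<in> carrier L \<Longrightarrow> F u \<in> carrier K"
  and F_mult: "u \<in> carrier L \<Longrightarrow> u' \<in> carrier L \<Longrightarrow> F (u \<otimes>\<^bsub>L\<^esub> u') = F u \<otimes>\<^bsub>K\<^esub> F u'"
  and F_one: "F \<one>\<^bsub>L\<^esub> = \<one>\<^bsub>K\<^esub>"
  using morphism by (auto simp: graded_morphism_def hom_def)

lemma r_span_preimage:
  assumes u: "u \<in> carrier L" and C: "C \<subseteq> Bg u"
  shows "y \<in> r_span R A \<iota>A (\<phi> ` C) \<Longrightarrow> b \<in> Bg u \<Longrightarrow> \<phi> b = y \<Longrightarrow> b \<in> r_span R B \<iota>B C"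
proof (induction arbitrary: b rule: r_span.induct)
  case zero
  then have "b = \<zero>\<^bsub>B\<^esub>"
    using bij[OF u] GB.Ag_zero[OF u] by (auto simp: bij_betw_def inj_on_def)
  then show ?case by (simp add: r_span.zero)
next
  case (add_smult r m s)
  have Bu: "Bg u \<subseteq> carrier B" using GB.Ag_carrier[OF u] .
  obtain c where c: "c \<in> C" "m = \<phi> c" using add_smult.hyps(2) by blast
  have "\<phi> ` C \<subseteq> Ag (F u)" using bij[OF u] C by (auto simp: bij_betw_def)
  then have "s \<in> Ag (F u)"
    using GA.H.r_span_subset_submodule[OF GA.Ag_submodule[OF F_closed[OF u]]] add_smult.hyps(3)
    by blast
  then obtain b2 where b2: "b2 \<in> Bg u" "\<phi> b2 = s"
    using bij[OF u] unfolding bij_betw_def by (metis imageE)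
  have b1: "\<iota>B r \<otimes>\<^bsub>B\<^esub> c \<in> Bg u" using GB.Ag_smult[OF u add_smult.hyps(1)] c C by blast
  have "c \<in> carrier B" "b2 \<in> carrier B" using c(1) b2(1) C Bu by blast+
  then have "\<phi> (\<iota>B r \<otimes>\<^bsub>B\<^esub> c \<oplus>\<^bsub>B\<^esub> b2) = \<iota>A r \<otimes>\<^bsub>A\<^esub> m \<oplus>\<^bsub>A\<^esub> s"
    using b2(2) c(2) add_smult.hyps(1) phi_scalar by simp
  moreover have "\<iota>B r \<otimes>\<^bsub>B\<^esub> c \<oplus>\<^bsub>B\<^esub> b2 \<in> Bg u" using GB.Ag_add[OF u b1 b2(1)] .
  ultimately have "b = \<iota>B r \<otimes>\<^bsub>B\<^esub> c \<oplus>\<^bsub>B\<^esub> b2"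
    using add_smult.prems bij[OF u] by (auto simp: bij_betw_def inj_on_def)
  then show ?case using r_span.add_smult[OF add_smult.hyps(1) c(1) add_smult.IH[OF b2]] by simp
qed

end

text \<open>An exponent vector \<open>z\<close> records, on \<open>Inl\<close>, the exponents of the homogeneous generators
  \<open>I\<close> of \<open>A\<close> (pairs of a degree and an element) and, on \<open>Inr\<close>, those of the generators \<open>T\<close>
  of the weight monoid of \<open>B\<close>.  For \<open>z \<in> exps\<close> the monomial \<open>amon z\<close> lies in \<open>A\<^bsub>F (bwt z)\<^esub>\<close> and
  so has a unique preimage \<open>lift z\<close> in \<open>B\<^bsub>bwt z\<^esub>\<close>.\<close>

locale lifting = degreewise_bijective_morphism R B \<iota>B L Bg A \<iota>A K Ag \<phi> F
  for R :: "('r,'m) ring_scheme"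
    and B :: "('b,'n) ring_scheme" and \<iota>B and L :: "('l,'p) monoid_scheme" and Bg
    and A :: "('a,'q) ring_scheme" and \<iota>A and K :: "('k,'s) monoid_scheme" and Ag and \<phi> and F +
  fixes I :: "('k \<times> 'a) set" and T :: "'l set"
  assumes finite_I: "finite I"
    and I_homogeneous: "\<And>i. i \<in> I \<Longrightarrow> fst i \<in> carrier K \<and> snd i \<in> Ag (fst i)"
    and A_span: "carrier A \<subseteq> r_span R A \<iota>A (power_prod A snd I ` supported_on I)"
    and finite_T: "finite T" and T_carrier: "T \<subseteq> carrier L"
    and weights: "weight_monoid B L Bg \<subseteq> mon_gen L T"
begin

definition adeg :: "(('k \<times> 'a) + 'l \<Rightarrow> nat) \<Rightarrow> 'k" where
  "adeg z = power_prod K fst I (z \<circ> Inl)"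

definition amon :: "(('k \<times> 'a) + 'l \<Rightarrow> nat) \<Rightarrow> 'a" where
  "amon z = power_prod A snd I (z \<circ> Inl)"

definition bwt :: "(('k \<times> 'a) + 'l \<Rightarrow> nat) \<Rightarrow> 'l" where
  "bwt z = power_prod L (\<lambda>t. t) T (z \<circ> Inr)"

definition exps :: "(('k \<times> 'a) + 'l \<Rightarrow> nat) set" where
  "exps = {z \<in> supported_on (Inl ` I \<union> Inr ` T). adeg z = F (bwt z)}"

definition lift :: "(('k \<times> 'a) + 'l \<Rightarrow> nat) \<Rightarrow> 'b" where
  "lift z = the_inv_into (Bg (bwt z)) \<phi> (amon z)"

lemma fst_I: "fst \<in> I \<rightarrow> carrier K" and snd_I: "snd \<in> I \<rightarrow> carrier A"
  using I_homogeneous GA.Ag_carrier by blast+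

lemma id_T: "(\<lambda>t. t) \<in> T \<rightarrow> carrier L"
  using T_carrier by blast

lemma adeg_closed: "adeg z \<in> carrier K"
  unfolding adeg_def using GA.K.power_prod_closed[OF fst_I] .

lemma bwt_closed: "bwt z \<in> carrier L"
  unfolding bwt_def using GB.K.power_prod_closed[OF id_T] .

lemma amon_homogeneous: "amon z \<in> Ag (adeg z)"
  unfolding amon_def adeg_def using GA.power_prod_homogeneous[OF one_A finite_I I_homogeneous] .

lemma adeg_add: "adeg (z + z') = adeg z \<otimes>\<^bsub>K\<^esub> adeg z'"
  and amon_add: "amon (z + z') = amon z \<otimes>\<^bsub>A\<^esub> amon z'"
  and bwt_add: "bwt (z + z') = bwt z \<otimes>\<^bsub>L\<^esub> bwt z'"
  unfolding adeg_def amon_def bwt_def plus_fun_comp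
  by (simp_all add: GA.K.power_prod_add[OF fst_I] GA.H.S.power_prod_add[OF snd_I]
      GB.K.power_prod_add[OF id_T])

lemma exps_add: "z \<in> exps \<Longrightarrow> z' \<in> exps \<Longrightarrow> z + z' \<in> exps"
  unfolding exps_def by (auto simp: supported_on_def adeg_add bwt_add F_mult bwt_closed)

lemma exps_diff:
  assumes m: "m \<in> exps" and z: "z \<in> exps" and "m \<le> z"
  shows "z - m \<in> exps"
proof -
  have z_eq: "z = m + (z - m)" using \<open>m \<le> z\<close> by (auto simp: le_fun_def fun_eq_iff)
  have "F (bwt m) \<otimes>\<^bsub>K\<^esub> adeg (z - m) = F (bwt m) \<otimes>\<^bsub>K\<^esub> F (bwt (z - m))"
    using z m adeg_add[of m "z - m"] bwt_add[of m "z - m"] F_mult bwt_closed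
    unfolding exps_def by (metis (mono_tags, lifting) mem_Collect_eq z_eq)
  then have "adeg (z - m) = F (bwt (z - m))"
    using cancel_K F_closed bwt_closed adeg_closed unfolding cancel_comm_monoid_def by blast
  moreover have "z - m \<in> supported_on (Inl ` I \<union> Inr ` T)"
    using z unfolding exps_def supported_on_def by auto
  ultimately show ?thesis unfolding exps_def by blast
qed

lemma zero_exps: "(\<lambda>_. 0) \<in> exps"
proof -
  have "adeg (\<lambda>_. 0) = \<one>\<^bsub>K\<^esub>" "bwt (\<lambda>_. 0) = \<one>\<^bsub>L\<^esub>"
    unfolding adeg_def bwt_def comp_def by (simp_all only: GA.K.power_prod_zero GB.K.power_prod_zero)
  then show ?thesis unfolding exps_def supported_on_def using F_one by simp
qed

lemma lift_mem: "z \<in> exps \<Longrightarrow> lift z \<in> Bg (bwt z)"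
  and phi_lift: "z \<in> exps \<Longrightarrow> \<phi> (lift z) = amon z"
  and lift_unique: "z \<in> exps \<Longrightarrow> b \<in> Bg (bwt z) \<Longrightarrow> \<phi> b = amon z \<Longrightarrow> lift z = b"
proof -
  assume z: "z \<in> exps"
  have bij_z: "bij_betw \<phi> (Bg (bwt z)) (Ag (F (bwt z)))" using bij[OF bwt_closed] .
  have "amon z \<in> Ag (F (bwt z))" using z amon_homogeneous[of z] unfolding exps_def by simp
  then show "lift z \<in> Bg (bwt z)" "\<phi> (lift z) = amon z"
    unfolding lift_def using bij_z
    by (auto intro: the_inv_into_into f_the_inv_into_f_bij_betw simp: bij_betw_def)
  show "b \<in> Bg (bwt z) \<Longrightarrow> \<phi> b = amon z \<Longrightarrow> lift z = b"
    unfolding lift_def using bij_z by (auto intro: the_inv_into_f_eq simp: bij_betw_def)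
qed

lemma lift_add:
  assumes z: "z \<in> exps" and z': "z' \<in> exps"
  shows "lift (z + z') = lift z \<otimes>\<^bsub>B\<^esub> lift z'"
proof (rule lift_unique[OF exps_add[OF z z']])
  show "lift z \<otimes>\<^bsub>B\<^esub> lift z' \<in> Bg (bwt (z + z'))"
    using GB.Ag_mult[OF bwt_closed bwt_closed lift_mem[OF z] lift_mem[OF z']] by (simp add: bwt_add)
  show "\<phi> (lift z \<otimes>\<^bsub>B\<^esub> lift z') = amon (z + z')"
  proof -
    have "lift z \<in> carrier B" "lift z' \<in> carrier B"
      using lift_mem z z' GB.Ag_carrier[OF bwt_closed] by blast+
    then show ?thesis using phi_lift[OF z] phi_lift[OF z'] by (simp add: amon_add)
  qed
qed

lemma lift_mem_generate_ring:
  assumes G: "G \<subseteq> exps" and gen: "\<And>z. z \<in> exps \<Longrightarrow> \<exists>gs. set gs \<subseteq> G \<and> z = sum_list gs"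
    and z: "z \<in> exps"
  shows "lift z \<in> generate_ring B (\<iota>B ` carrier R \<union> lift ` insert (\<lambda>_. 0) G)"
proof -
  let ?ring = "generate_ring B (\<iota>B ` carrier R \<union> lift ` insert (\<lambda>_. 0) G)"
  have "sum_list gs \<in> exps \<and> lift (sum_list gs) \<in> ?ring" if "set gs \<subseteq> G" for gs
    using that
  proof (induction gs)
    case Nil
    have "lift (\<lambda>_. 0) \<in> ?ring" by (rule generate_ring.incl) blast
    then show ?case using zero_exps by simp
  next
    case (Cons g gs)
    then have g: "g \<in> exps" "lift g \<in> ?ring" using G by (auto intro: generate_ring.incl)
    have gs: "sum_list gs \<in> exps" "lift (sum_list gs) \<in> ?ring" using Cons by auto
    have "lift (g + sum_list gs) \<in> ?ring"
      using generate_ring.eng_mult[OF g(2) gs(2)] lift_add[OF g(1) gs(1)] by simp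
    then show ?case unfolding sum_list.Cons using exps_add[OF g(1) gs(1)] by blast
  qed
  then show ?thesis using gen[OF z] by blast
qed

lemma case_sum_exps:
  assumes e: "e \<in> supported_on I" and t: "t \<in> supported_on T"
    and u: "power_prod L (\<lambda>t. t) T t = u" and deg_e: "power_prod K fst I e = F u"
  shows "case_sum e t \<in> exps" "bwt (case_sum e t) = u" "amon (case_sum e t) = power_prod A snd I e"
proof -
  show bwt: "bwt (case_sum e t) = u" unfolding bwt_def case_sum_o_inj using u .
  show "amon (case_sum e t) = power_prod A snd I e" unfolding amon_def case_sum_o_inj ..
  have "adeg (case_sum e t) = power_prod K fst I e" unfolding adeg_def case_sum_o_inj ..
  moreover have "case_sum e t \<in> supported_on (Inl ` I \<union> Inr ` T)"
    using e t unfolding supported_on_def by (auto split: sum.split)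
  ultimately show "case_sum e t \<in> exps" unfolding exps_def using deg_e bwt by simp
qed

lemma homogeneous_mem_generate_ring:
  assumes G: "G \<subseteq> exps" and gen: "\<And>z. z \<in> exps \<Longrightarrow> \<exists>gs. set gs \<subseteq> G \<and> z = sum_list gs"
    and u: "u \<in> carrier L" and b: "b \<in> Bg u"
  shows "b \<in> generate_ring B (\<iota>B ` carrier R \<union> lift ` insert (\<lambda>_. 0) G)"
proof (cases "b = \<zero>\<^bsub>B\<^esub>")
  case True
  then show ?thesis using GB.H.S.zero_in_generate by simp
next
  case False
  let ?ring = "generate_ring B (\<iota>B ` carrier R \<union> lift ` insert (\<lambda>_. 0) G)"
  let ?E = "{e \<in> supported_on I. power_prod K fst I e = F u}"
  have "u \<in> weight_monoid B L Bg" using u b False GB.Ag_zero[OF u] by (auto simp: weight_monoid_def)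
  then obtain t where t: "t \<in> supported_on T" "power_prod L (\<lambda>t. t) T t = u"
    using weights GB.K.mon_gen_subset_power_prods[OF finite_T T_carrier] by blast
  define C where "C = (\<lambda>e. lift (case_sum e t)) ` ?E"
  have C: "C \<subseteq> Bg u" "C \<subseteq> ?ring" "\<phi> ` C = power_prod A snd I ` ?E"
    unfolding C_def image_image
    using case_sum_exps[OF _ t] lift_mem lift_mem_generate_ring[OF G gen] phi_lift
    by (force intro: image_cong)+
  have "\<phi> b \<in> Ag (F u)" using bij[OF u] b by (auto simp: bij_betw_def)
  then have "\<phi> b \<in> r_span R A \<iota>A (\<phi> ` C)"
    using GA.homogeneous_mem_r_span_monomials[OF one_A finite_I I_homogeneous A_span F_closed[OF u]]
    unfolding C(3) by blast
  then have "b \<in> r_span R B \<iota>B C" using r_span_preimage[OF u C(1) _ b] by blast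
  moreover have "\<iota>B ` carrier R \<union> lift ` insert (\<lambda>_. 0) G \<subseteq> carrier B"
    using lift_mem G zero_exps GB.Ag_carrier[OF bwt_closed] by blast
  ultimately show ?thesis using GB.H.r_span_subset_generate_ring C(2) by blast
qed

lemma fg_algebra_source: "fg_algebra R B \<iota>B"
proof -
  have fin: "finite (Inl ` I \<union> Inr ` T)" using finite_I finite_T by blast
  have supp: "exps \<subseteq> supported_on (Inl ` I \<union> Inr ` T)" unfolding exps_def by blast
  obtain G where G: "finite G" "G \<subseteq> exps" "\<And>z. z \<in> exps \<Longrightarrow> \<exists>gs. set gs \<subseteq> G \<and> z = sum_list gs"
    using saturated_monoid_finitely_generated[OF fin supp exps_diff] by blast
  \<comment> \<open>\<open>lift (\<lambda>_. 0)\<close> is the degree-one preimage of \<open>\<one>\<close>; it is a generator because \<open>\<one>\<^bsub>B\<^esub>\<close>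
    is not known to be homogeneous.\<close>
  let ?H = "lift ` insert (\<lambda>_. 0) G"
  let ?ring = "generate_ring B (\<iota>B ` carrier R \<union> ?H)"
  have H: "?H \<subseteq> carrier B" using lift_mem G(2) zero_exps GB.Ag_carrier[OF bwt_closed] by blast
  then have ring: "?ring \<subseteq> carrier B" by (intro GB.H.S.generate_ring_incl) auto
  have "b \<in> ?ring" if b: "b \<in> carrier B" for b
  proof (rule GB.mem_if_hcomps_mem[OF b ring GB.H.S.zero_in_generate])
    show "x \<oplus>\<^bsub>B\<^esub> y \<in> ?ring" if "x \<in> ?ring" "y \<in> ?ring" for x y
      using that by (rule generate_ring.eng_add)
    show "GB.hcomp b w \<in> ?ring" if "w \<in> GB.hsupp b" for w
      using homogeneous_mem_generate_ring[OF G(2,3)] GB.hcomp_mem[OF b] GB.hsupp_subset[OF b] that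
      by blast
  qed
  with ring have "?ring = carrier B" by blast
  moreover have "finite ?H" using G(1) by blast
  ultimately show ?thesis unfolding fg_algebra_def using H by (intro exI[of _ ?H] conjI)
qed

end

lemma (in degreewise_bijective_morphism) fg_algebra_source_if_fg_target:
  assumes "fg_monoid_set L (weight_monoid B L Bg)" and "fg_algebra R A \<iota>A"
  shows "fg_algebra R B \<iota>B"
proof -
  obtain I where I: "finite I" "\<And>i. i \<in> I \<Longrightarrow> fst i \<in> carrier K \<and> snd i \<in> Ag (fst i)"
    "carrier A \<subseteq> r_span R A \<iota>A (power_prod A snd I ` supported_on I)"
    using GA.fg_algebra_homogeneous_generators[OF assms(2)] by blast
  obtain T where T: "finite T" "T \<subseteq> carrier L" "mon_gen L T = weight_monoid B L Bg"
    using assms(1) by (auto simp: fg_monoid_set_def)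
  interpret lifting R B \<iota>B L Bg A \<iota>A K Ag \<phi> F I T
    using I T by unfold_locales auto
  show ?thesis by (rule fg_algebra_source)
qed

theorem proposition1p1p2p6:
  fixes R :: "('r,'m) ring_scheme"
    and B :: "('b,'n) ring_scheme" and \<iota>B :: "'r \<Rightarrow> 'b"
    and L :: "('l,'p) monoid_scheme" and Bg :: "'l \<Rightarrow> 'b set"
    and A :: "('a,'q) ring_scheme" and \<iota>A :: "'r \<Rightarrow> 'a"
    and K :: "('k,'s) monoid_scheme" and Ag :: "'k \<Rightarrow> 'a set"
    and \<phi> :: "'b \<Rightarrow> 'a" and F :: "'l \<Rightarrow> 'k"
  assumes "cring R" and "noetherian_ring R"
    and "cancel_comm_monoid L" and "cancel_comm_monoid K"
    and "graded_algebra R B \<iota>B L Bg"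
    and "graded_algebra R A \<iota>A K Ag"
    and "domain A"
    and "graded_morphism R B \<iota>B L Bg A \<iota>A K Ag \<phi> F"
    and "fg_monoid_set L (weight_monoid B L Bg)"
    and "\<forall>u\<in>carrier L. bij_betw \<phi> (Bg u) (Ag (F u))"
    and "fg_algebra R A \<iota>A"
  shows "fg_algebra R B \<iota>B"
proof -
  interpret GA: graded R A \<iota>A K Ag using assms(6) by (rule graded.intro)
  interpret degreewise_bijective_morphism R B \<iota>B L Bg A \<iota>A K Ag \<phi> F
    using assms(5,8,10,4) GA.one_homogeneous[OF assms(7,4)]
    by (intro degreewise_bijective_morphism.intro degreewise_bijective_morphism_axioms.intro
        graded.intro GA.graded_axioms) auto
  show ?thesis using fg_algebra_source_if_fg_target assms(9,11) .
qed

end
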